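(* Let all issues be binary. Fix a vote profile $a$, an agent $j$ and an issue $i$. Consider three uncertainty parameter vectors $r_j,q_j,\hat q_j\in\mathbb R_{\ge0}^p$: - $q_j$ differs from $r_j$ only on one issue $k\ne i$, with $r_j^k<q_j^k$; - $\hat q_j$ differs from $r_j$ only on issue $i$, with $r_j^i<\hat q_j^i$. Let $LD^i_j$, $LQ^i_j$ and $\widehat{LQ}^i_j$ be the sets of local dominance improvement steps of $j$ on issue $i$ at $a$ under $S=\tilde S_{-j}(a;r_j)$, $S=\tilde S_{-j}(a;q_j)$ and $S=\tilde S_{-j}(a;\hat q_j)$, respectively. Then $$LQ^i_j\subseteq LD^i_j\subseteq \widehat{LQ}^i_j.$$
   Context: Issues $\mathcal P=\{1,\dots,p\}$, each with a finite candidate set $D_i$; alternatives are $\mathcal D=\prod_i D_i$. Binary issues means $D_i=\{0,1\}$ for all $i$. There are $n$ agents, and each agent $j$ has a strict linear order $\succ_j$ over $\mathcal D$. A vote profile is $a\in\mathcal D^n$. Score tuples and outcomes: - A score tuple $v=(v^i)_{i\in\mathcal P}$ consists of vectors $v^i\in\mathbb N^{D_i}$. - Plurality outcome $f(v)=(f^i(v))_i$: $f^i(v)$ is the candidate of maximum score $v^i(c)$, with ties broken lexicographically. - For a vote $b\in\mathcal D$, $v+b$ adds one to $v^i(b^i)$ for every issue $i$. - $s_{-j}(a)$ is the score tuple of $a$ without agent $j$'s vote. Uncertainty sets: a distance on score vectors of issue $i$ is candidate-wise if $\delta(s,\tilde s)=\max_{c\in D_i}\hat\delta(s(c),\tilde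 s(c))$ for a monotone function $\hat\delta$. Examples are the $\ell_\infty$ distance $\hat\delta(s,\tilde s)=|s-\tilde s|$ and the multiplicative distance. Given uncertainty parameters $r_j=(r_j^i)_i$, define $$\tilde S^i_{-j}(a;r^i_j)=\{v^i:\delta(v^i,s^i_{-j}(a))\le r^i_j\}, \qquad \tilde S_{-j}(a;r_j)=\prod_i\tilde S^i_{-j}(a;r_j^i).$$ Local dominance: a vote $\hat a_j$ $S$-beats $a_j$ if there is $v\in S$ with $f(v+\hat a_j)\succ_j f(v+a_j)$. The vote $\hat a_j$ $S$-dominates $a_j$ if $\hat a_j$ $S$-beats $a_j$ and $a_j$ does not $S$-beat $\hat a_j$. The set of local dominance improvement (LDI) steps of $j$ on issue $i$ (under $S$) is the set of votes that satisfy all of the following: - they $S$-dominate $a_j$; - they differ from $a_j$ only on issue $i$; - they are not $S$-dominated by any vote differing from $a_j$ only on issue $i$. *)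

theory Defs
  imports Main "HOL-Library.Extended_Real"
begin

(* Binary issues 0..<p, candidate set D_i = {False, True} (False = 0, True = 1).
   An alternative / vote is a function nat => bool, extensional: False outside {..<p}. *)
definition alts :: "nat \<Rightarrow> (nat \<Rightarrow> bool) set" where
  "alts p = {b. \<forall>i. p \<le> i \<longrightarrow> b i = False}"

(* score tuple: v i c = score of candidate c on issue i *)
type_synonym score = "nat \<Rightarrow> bool \<Rightarrow> nat"

(* plurality outcome, ties broken lexicographically (in favour of 0 = False) *)
definition outcome :: "nat \<Rightarrow> score \<Rightarrow> (nat \<Rightarrow> bool)" where
  "outcome p v = (\<lambda>i. if i < p then v i False < v i True else False)"

definition add_vote :: "score \<Rightarrow> (nat \<Rightarrow> bool) \<Rightarrow> score" where
  "add_vote v b = (\<lambda>i c. v i c + (if b i = c then 1 else 0))"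

(* s_{-j}(a): profile a j' = vote of agent j' (agents 0..<n) *)
definition score_wo :: "nat \<Rightarrow> (nat \<Rightarrow> nat \<Rightarrow> bool) \<Rightarrow> nat \<Rightarrow> score" where
  "score_wo n a j = (\<lambda>i c. card {j'. j' < n \<and> j' \<noteq> j \<and> a j' i = c})"

definition monotone_dhat :: "(nat \<Rightarrow> nat \<Rightarrow> real) \<Rightarrow> bool" where
  "monotone_dhat dh \<longleftrightarrow>
     (\<forall>x. dh x x = 0) \<and>
     (\<forall>x y z. (x \<le> y \<and> y \<le> z \<or> z \<le> y \<and> y \<le> x) \<longrightarrow> dh x y \<le> dh x z \<and> dh y x \<le> dh z x)"

definition cw_dist :: "(nat \<Rightarrow> nat \<Rightarrow> real) \<Rightarrow> (bool \<Rightarrow> nat) \<Rightarrow> (bool \<Rightarrow> nat) \<Rightarrow> real" where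
  "cw_dist dh s t = max (dh (s False) (t False)) (dh (s True) (t True))"

definition unc_set :: "(nat \<Rightarrow> nat \<Rightarrow> real) \<Rightarrow> nat \<Rightarrow> nat \<Rightarrow> (nat \<Rightarrow> nat \<Rightarrow> bool) \<Rightarrow> nat
     \<Rightarrow> (nat \<Rightarrow> real) \<Rightarrow> score set" where
  "unc_set dh p n a j r = {v. \<forall>i<p. cw_dist dh (v i) (score_wo n a j i) \<le> r i}"

definition beats :: "nat \<Rightarrow> ((nat \<Rightarrow> bool) \<Rightarrow> (nat \<Rightarrow> bool) \<Rightarrow> bool) \<Rightarrow> score set
     \<Rightarrow> (nat \<Rightarrow> bool) \<Rightarrow> (nat \<Rightarrow> bool) \<Rightarrow> bool" where
  "beats p pref S b' b \<longleftrightarrow> (\<exists>v\<in>S. pref (outcome p (add_vote v b')) (outcome p (add_vote v b)))"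

definition dominates :: "nat \<Rightarrow> ((nat \<Rightarrow> bool) \<Rightarrow> (nat \<Rightarrow> bool) \<Rightarrow> bool) \<Rightarrow> score set
     \<Rightarrow> (nat \<Rightarrow> bool) \<Rightarrow> (nat \<Rightarrow> bool) \<Rightarrow> bool" where
  "dominates p pref S b' b \<longleftrightarrow> beats p pref S b' b \<and> \<not> beats p pref S b b'"

definition differs_only_on :: "nat \<Rightarrow> nat \<Rightarrow> (nat \<Rightarrow> bool) \<Rightarrow> (nat \<Rightarrow> bool) \<Rightarrow> bool" where
  "differs_only_on p i b' b \<longleftrightarrow> (\<forall>l<p. l \<noteq> i \<longrightarrow> b' l = b l)"

definition LDI :: "nat \<Rightarrow> ((nat \<Rightarrow> bool) \<Rightarrow> (nat \<Rightarrow> bool) \<Rightarrow> bool) \<Rightarrow> score set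
     \<Rightarrow> (nat \<Rightarrow> bool) \<Rightarrow> nat \<Rightarrow> (nat \<Rightarrow> bool) set" where
  "LDI p pref S b i = {b' \<in> alts p. dominates p pref S b' b \<and> differs_only_on p i b' b \<and>
      \<not> (\<exists>b''\<in>alts p. differs_only_on p i b'' b \<and> dominates p pref S b'' b')}"

definition strict_linear_on :: "'a set \<Rightarrow> ('a \<Rightarrow> 'a \<Rightarrow> bool) \<Rightarrow> bool" where
  "strict_linear_on A R \<longleftrightarrow>
     (\<forall>x y. R x y \<longrightarrow> x \<in> A \<and> y \<in> A) \<and>
     (\<forall>x\<in>A. \<not> R x x) \<and>
     (\<forall>x\<in>A. \<forall>y\<in>A. \<forall>z\<in>A. R x y \<longrightarrow> R y z \<longrightarrow> R x z) \<and>
     (\<forall>x\<in>A. \<forall>y\<in>A. x \<noteq> y \<longrightarrow> R x y \<or> R y x)"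

end

theory Submission
  imports Defs
begin

text \<open>
  Since the issues are binary, the only vote that differs from \<open>a\<^sub>j\<close> exactly on issue \<open>i\<close> is
  its flip, so an LDI step on issue \<open>i\<close> is just a dominating flip. For a flip, the two outcomes
  agree off issue \<open>i\<close>, and whenever they differ on issue \<open>i\<close> each vote wins that issue.
  Enlarging the uncertainty on another issue \<open>k\<close> can only make dominance harder: a witness for
  the flip beating \<open>a\<^sub>j\<close> can be moved back into the smaller set by resetting its \<open>k\<close>-scores to the
  true ones, and then totality of the preference together with the absence of counter-witnesses
  shows the flip still wins there. Enlarging the uncertainty on issue \<open>i\<close> itself can only make
  dominance easier: a counter-witness in the larger set can be grafted onto the issue-\<open>i\<close> scores
  of the original witness, which yields the same outcomes inside the smaller set.
\<close>

lemma outcome_add_vote_issue_eq: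
  "w l = v l \<Longrightarrow> b' l = b l \<Longrightarrow> outcome p (add_vote w b') l = outcome p (add_vote v b) l"
  by (simp add: outcome_def add_vote_def)

lemma outcome_in_alts: "outcome p v \<in> alts p"
  by (simp add: outcome_def alts_def)

lemma outcome_eq_iff_issue_eq:
  assumes "differs_only_on p i b' b"
  shows "outcome p (add_vote v b') = outcome p (add_vote v b)
     \<longleftrightarrow> outcome p (add_vote v b') i = outcome p (add_vote v b) i"
proof
  assume issue: "outcome p (add_vote v b') i = outcome p (add_vote v b) i"
  show "outcome p (add_vote v b') = outcome p (add_vote v b)"
  proof
    fix l show "outcome p (add_vote v b') l = outcome p (add_vote v b) l"
      using issue assms by (cases "l = i") (auto simp: outcome_def add_vote_def differs_only_on_def)
  qed
qed simp

lemma outcome_fun_upd_issue: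
  assumes "outcome p (add_vote v c) i = outcome p (add_vote w c) i"
  shows "outcome p (add_vote (w(i := v i)) c) = outcome p (add_vote w c)"
proof
  fix l show "outcome p (add_vote (w(i := v i)) c) l = outcome p (add_vote w c) l"
  proof (cases "l = i")
    case True
    have "outcome p (add_vote (w(i := v i)) c) i = outcome p (add_vote v c) i"
      by (rule outcome_add_vote_issue_eq) simp_all
    with True assms show ?thesis by simp
  next
    case False
    then show ?thesis by (intro outcome_add_vote_issue_eq) simp_all
  qed
qed

lemma outcome_pivotal:
  assumes "b i \<noteq> b' i" "outcome p (add_vote v b) i \<noteq> outcome p (add_vote v b') i"
  shows "outcome p (add_vote v b) i = b i"
  using assms by (cases "b i"; cases "b' i"; cases "i < p"; simp add: outcome_def add_vote_def; linarith)

lemma alts_eq_if_differs_only_on: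
  assumes "b \<in> alts p" "c \<in> alts p" "differs_only_on p i b d" "differs_only_on p i c d" "b i = c i"
  shows "b = c"
proof
  fix l show "b l = c l"
  proof (cases "l < p \<and> l \<noteq> i")
    case True
    then show ?thesis using assms(3,4) by (simp add: differs_only_on_def)
  next
    case False
    then show ?thesis using assms(1,2,5) by (auto simp: alts_def)
  qed
qed

lemma alts_flip_issue:
  assumes "b \<in> alts p" "b' \<in> alts p" "differs_only_on p i b' b" "b' \<noteq> b"
  shows "b' i \<noteq> b i"
  using alts_eq_if_differs_only_on[OF assms(2,1,3)] assms(4) by (auto simp: differs_only_on_def)

lemma strict_linear_onD:
  assumes "strict_linear_on A R"
  shows strict_linear_on_neq: "R x y \<Longrightarrow> x \<noteq> y"
    and strict_linear_on_connex: "x \<in> A \<Longrightarrow> y \<in> A \<Longrightarrow> x \<noteq> y \<Longrightarrow> \<not> R y x \<Longrightarrow> R x y"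
  using assms unfolding strict_linear_on_def by metis+

lemma dominates_irrefl: "\<not> dominates p P S b b"
  by (simp add: dominates_def)

lemma LDI_binary:
  assumes "b \<in> alts p"
  shows "LDI p P S b i = {b' \<in> alts p. differs_only_on p i b' b \<and> dominates p P S b' b}"
proof -
  have "\<not> dominates p P S b'' b'"
    if b': "b' \<in> alts p" "differs_only_on p i b' b" "dominates p P S b' b"
      and b'': "b'' \<in> alts p" "differs_only_on p i b'' b" for b' b''
  proof
    assume dom: "dominates p P S b'' b'"
    have "b' i \<noteq> b i"
      using alts_flip_issue[OF assms b'(1,2)] b'(3) dominates_irrefl by metis
    moreover have "b'' i \<noteq> b' i"
      using alts_eq_if_differs_only_on[OF b''(1) b'(1) b''(2) b'(2)] dom dominates_irrefl by metis
    ultimately have "b'' = b"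
      using alts_eq_if_differs_only_on[OF b''(1) assms b''(2)] by (auto simp: differs_only_on_def)
    with dom b'(3) show False by (simp add: dominates_def)
  qed
  then show ?thesis by (auto simp: LDI_def)
qed

lemma LDI_binary_mono:
  assumes "b \<in> alts p"
    and "\<And>b'. b' \<in> alts p \<Longrightarrow> differs_only_on p i b' b \<Longrightarrow> dominates p P S b' b \<Longrightarrow> dominates p P S' b' b"
  shows "LDI p P S b i \<subseteq> LDI p P S' b i"
  using assms by (auto simp: LDI_binary)

lemma dominates_shrink_keeping_issue:
  assumes lin: "strict_linear_on (alts p) P"
    and sub: "S \<subseteq> S'"
    and keep: "\<forall>v\<in>S'. \<exists>v'\<in>S. v' i = v i"
    and d: "differs_only_on p i b' b"
    and dom: "dominates p P S' b' b"
  shows "dominates p P S b' b"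
proof -
  obtain v where v: "v \<in> S'" "P (outcome p (add_vote v b')) (outcome p (add_vote v b))"
    using dom by (auto simp: dominates_def beats_def)
  have no_counter: "\<not> beats p P S b b'"
    using dom sub by (auto simp: dominates_def beats_def)
  obtain v' where v': "v' \<in> S" "v' i = v i" using keep v(1) by blast
  have "outcome p (add_vote v b') \<noteq> outcome p (add_vote v b)"
    using strict_linear_on_neq[OF lin, OF v(2)] .
  then have "outcome p (add_vote v b') i \<noteq> outcome p (add_vote v b) i"
    using outcome_eq_iff_issue_eq[OF d] by blast
  moreover have "outcome p (add_vote v' c) i = outcome p (add_vote v c) i" for c
    using v'(2) by (rule outcome_add_vote_issue_eq) simp
  ultimately have "outcome p (add_vote v' b') \<noteq> outcome p (add_vote v' b)"
    by (metis outcome_eq_iff_issue_eq[OF d])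
  moreover have "\<not> P (outcome p (add_vote v' b)) (outcome p (add_vote v' b'))"
    using no_counter v'(1) by (auto simp: beats_def)
  ultimately have "P (outcome p (add_vote v' b')) (outcome p (add_vote v' b))"
    using strict_linear_on_connex[OF lin outcome_in_alts outcome_in_alts] by blast
  with v'(1) no_counter show ?thesis by (auto simp: dominates_def beats_def)
qed

lemma dominates_enlarge_issue:
  assumes lin: "strict_linear_on (alts p) P"
    and sub: "S \<subseteq> S'"
    and graft: "\<forall>w\<in>S'. \<forall>v\<in>S. w(i := v i) \<in> S"
    and b: "b \<in> alts p" "b' \<in> alts p"
    and d: "differs_only_on p i b' b"
    and dom: "dominates p P S b' b"
  shows "dominates p P S' b' b"
proof -
  obtain v where v: "v \<in> S" "P (outcome p (add_vote v b')) (outcome p (add_vote v b))"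
    using dom by (auto simp: dominates_def beats_def)
  have flip: "b i \<noteq> b' i"
    using alts_flip_issue[OF b d] dom dominates_irrefl by metis
  have wins_issue: "outcome p (add_vote u b) i = b i \<and> outcome p (add_vote u b') i = b' i"
    if "outcome p (add_vote u b') \<noteq> outcome p (add_vote u b)" for u
  proof -
    have "outcome p (add_vote u b) i \<noteq> outcome p (add_vote u b') i"
      using that outcome_eq_iff_issue_eq[OF d, of u] by auto
    then show ?thesis
      using outcome_pivotal[of b i b' p u] outcome_pivotal[of b' i b p u] flip by auto
  qed
  have v_wins: "outcome p (add_vote v b) i = b i \<and> outcome p (add_vote v b') i = b' i"
    using wins_issue strict_linear_on_neq[OF lin, OF v(2)] .
  have "\<not> beats p P S' b b'"
  proof
    assume "beats p P S' b b'"
    then obtain w where w: "w \<in> S'" "P (outcome p (add_vote w b)) (outcome p (add_vote w b'))"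
      by (auto simp: beats_def)
    have w_wins: "outcome p (add_vote w b) i = b i \<and> outcome p (add_vote w b') i = b' i"
      using wins_issue strict_linear_on_neq[OF lin, OF w(2)] by metis
    have "outcome p (add_vote (w(i := v i)) b) = outcome p (add_vote w b)"
      by (rule outcome_fun_upd_issue) (use v_wins w_wins in simp)
    moreover have "outcome p (add_vote (w(i := v i)) b') = outcome p (add_vote w b')"
      by (rule outcome_fun_upd_issue) (use v_wins w_wins in simp)
    ultimately have "P (outcome p (add_vote (w(i := v i)) b)) (outcome p (add_vote (w(i := v i)) b'))"
      using w(2) by simp
    moreover have "w(i := v i) \<in> S" using graft w(1) v(1) by blast
    ultimately have "beats p P S b b'" by (auto simp: beats_def)
    with dom show False by (simp add: dominates_def)
  qed
  with dom sub show ?thesis by (auto simp: dominates_def beats_def)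
qed

lemma unc_set_mono: "\<forall>l<p. r l \<le> q l \<Longrightarrow> unc_set dh p n a j r \<subseteq> unc_set dh p n a j q"
  unfolding unc_set_def by (auto intro: order_trans)

lemma unc_set_fun_upd:
  "w \<in> unc_set dh p n a j q \<Longrightarrow> v \<in> unc_set dh p n a j r \<Longrightarrow> \<forall>l<p. l \<noteq> k \<longrightarrow> q l = r l
   \<Longrightarrow> w(k := v k) \<in> unc_set dh p n a j r"
  by (auto simp: unc_set_def)

lemma score_wo_in_unc_set:
  "monotone_dhat dh \<Longrightarrow> \<forall>l<p. 0 \<le> r l \<Longrightarrow> score_wo n a j \<in> unc_set dh p n a j r"
  by (simp add: unc_set_def cw_dist_def monotone_dhat_def)

theorem theorem1:
  fixes p n :: nat
    and pref :: "nat \<Rightarrow> (nat \<Rightarrow> bool) \<Rightarrow> (nat \<Rightarrow> bool) \<Rightarrow> bool"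
    and a :: "nat \<Rightarrow> nat \<Rightarrow> bool"
    and dh :: "nat \<Rightarrow> nat \<Rightarrow> real"
    and j i k :: nat
    and r q qh :: "nat \<Rightarrow> real"
  assumes dh: "monotone_dhat dh"
    and prefs: "\<forall>j'<n. strict_linear_on (alts p) (pref j')"
    and profile: "\<forall>j'<n. a j' \<in> alts p"
    and j: "j < n" and i: "i < p" and k: "k < p" "k \<noteq> i"
    and r_nonneg: "\<forall>l<p. 0 \<le> r l"
    and q_nonneg: "\<forall>l<p. 0 \<le> q l"
    and qh_nonneg: "\<forall>l<p. 0 \<le> qh l"
    and q: "\<forall>l<p. l \<noteq> k \<longrightarrow> q l = r l" "r k < q k"
    and qh: "\<forall>l<p. l \<noteq> i \<longrightarrow> qh l = r l" "r i < qh i"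
  shows "LDI p (pref j) (unc_set dh p n a j q) (a j) i \<subseteq> LDI p (pref j) (unc_set dh p n a j r) (a j) i
       \<and> LDI p (pref j) (unc_set dh p n a j r) (a j) i \<subseteq> LDI p (pref j) (unc_set dh p n a j qh) (a j) i"
proof
  let ?S = "unc_set dh p n a j"
  have lin: "strict_linear_on (alts p) (pref j)" and aj: "a j \<in> alts p"
    using prefs profile j by auto
  have r_sub_q: "?S r \<subseteq> ?S q"
    using q by (intro unc_set_mono) (metis order.refl order.strict_implies_order)
  have r_sub_qh: "?S r \<subseteq> ?S qh"
    using qh by (intro unc_set_mono) (metis order.refl order.strict_implies_order)
  have keep_i: "\<forall>v\<in>?S q. \<exists>v'\<in>?S r. v' i = v i"
  proof
    fix v assume "v \<in> ?S q"
    then have "v(k := score_wo n a j k) \<in> ?S r"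
      using unc_set_fun_upd score_wo_in_unc_set[OF dh r_nonneg] q(1) by blast
    moreover have "(v(k := score_wo n a j k)) i = v i" using k(2) by simp
    ultimately show "\<exists>v'\<in>?S r. v' i = v i" by blast
  qed
  have graft_i: "\<forall>w\<in>?S qh. \<forall>v\<in>?S r. w(i := v i) \<in> ?S r"
    using unc_set_fun_upd qh(1) by blast
  show "LDI p (pref j) (?S q) (a j) i \<subseteq> LDI p (pref j) (?S r) (a j) i"
    using aj dominates_shrink_keeping_issue[OF lin r_sub_q keep_i]
    by (rule LDI_binary_mono)
  show "LDI p (pref j) (?S r) (a j) i \<subseteq> LDI p (pref j) (?S qh) (a j) i"
    using aj dominates_enlarge_issue[OF lin r_sub_qh graft_i aj]
    by (rule LDI_binary_mono)
qed

end
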